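(* Let $(A,B,\alpha)$ be a topological crossed module. Let $L=\{[\gamma]\in\pi A:\gamma(0)=0\}$, $M=\{[\beta]\in\pi B:\beta(0)=0\}$, $N=A$, $P=B$, with $\lambda[\gamma]=[\alpha\circ\gamma]$, $\lambda'[\gamma]=\gamma(1)$, $\mu[\beta]=\beta(1)$, $\nu=\alpha$. Let $P=B$ act on $N=A$ by the given action, on $L$ by $b\cdot[\gamma]=[r\mapsto b\cdot\gamma(r)]$, and on $M$ by $b\cdot[\beta]=[r\mapsto b+\beta(r)-b]$, and define $h:M\times N\to L$ by $h([\beta],a)=[r\mapsto\beta(r)\cdot a-a]$. Then $(L,M,N,P)$ with these data is a crossed square.
   Context: Groups are written additively. A crossed module $(A,B,\alpha)$: groups $A,B$, a left action of $B$ on $A$ by automorphisms, a homomorphism $\alpha:A\to B$ with $\alpha(b\cdot a)=b+\alpha(a)-b$ and $\alpha(a)\cdot a'=a+a'-a$. A topological crossed module is a crossed module in which $A,B$ are topological groups and $\alpha$ and the action are continuous. For a topological group $X$, $\pi X$ is the set of homotopy classes rel endpoints of paths $[0,1]\to X$, a group under pointwise addition. A crossed square: homomorphisms $\lambda:L\to M$, $\lambda':L\to N$, $\mu:M\to P$, $\nu:N\to P$ with $\nu\lambda'=\mu\lambda$, left actions of $P$ on $L,M,N$ (inducing actions of $M$ on $L,N$ via $\mu$ and of $N$ on $L,M$ via $\nu$, e.g. $m\cdot n=\mu(m)\cdot n$), and a function $h:M\times N\to L$, such that (i) $\lambda,\lambda'$ are $P$-equivariant and $\mu$, $\nu$, $\mu\lambda$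 are crossed modules; (ii) $\lambda h(m,n)=m+n\cdot(-m)$, $\lambda'h(m,n)=m\cdot n-n$; (iii) $h(\lambda(l),n)=l+n\cdot(-l)$, $h(m,\lambda'(l))=m\cdot l-l$; (iv) $h(m+m',n)=m\cdot h(m',n)+h(m,n)$, $h(m,n+n')=h(m,n)+n\cdot h(m,n')$; (v) $h(p\cdot m,p\cdot n)=p\cdot h(m,n)$, for all $l\in L$, $m,m'\in M$, $n,n'\in N$, $p\in P$. *)

theory Defs
  imports "HOL-Analysis.Analysis" "HOL-Algebra.Group"
begin

text \<open>Groups are HOL-Algebra groups (written multiplicatively here; the paper writes them
additively: \<open>x + y\<close> is \<open>x \<otimes> y\<close>, \<open>-x\<close> is \<open>inv x\<close>, \<open>0\<close> is \<open>\<one>\<close>).\<close>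

definition action_by_aut :: "('b,'c) monoid_scheme \<Rightarrow> ('a,'d) monoid_scheme \<Rightarrow> ('b \<Rightarrow> 'a \<Rightarrow> 'a) \<Rightarrow> bool" where
  "action_by_aut B A act \<equiv>
     (\<forall>b\<in>carrier B. act b \<in> iso A A) \<and>
     (\<forall>a\<in>carrier A. act \<one>\<^bsub>B\<^esub> a = a) \<and>
     (\<forall>b\<in>carrier B. \<forall>b'\<in>carrier B. \<forall>a\<in>carrier A. act (b \<otimes>\<^bsub>B\<^esub> b') a = act b (act b' a))"

definition crossed_module :: "('a,'c) monoid_scheme \<Rightarrow> ('b,'d) monoid_scheme \<Rightarrow> ('a \<Rightarrow> 'b) \<Rightarrow> ('b \<Rightarrow> 'a \<Rightarrow> 'a) \<Rightarrow> bool" where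
  "crossed_module A B \<alpha> act \<equiv>
     group A \<and> group B \<and> action_by_aut B A act \<and> \<alpha> \<in> hom A B \<and>
     (\<forall>b\<in>carrier B. \<forall>a\<in>carrier A. \<alpha> (act b a) = b \<otimes>\<^bsub>B\<^esub> \<alpha> a \<otimes>\<^bsub>B\<^esub> inv\<^bsub>B\<^esub> b) \<and>
     (\<forall>a\<in>carrier A. \<forall>a'\<in>carrier A. act (\<alpha> a) a' = a \<otimes>\<^bsub>A\<^esub> a' \<otimes>\<^bsub>A\<^esub> inv\<^bsub>A\<^esub> a)"

definition topological_group :: "('a,'c) monoid_scheme \<Rightarrow> 'a topology \<Rightarrow> bool" where
  "topological_group G T \<equiv>
     group G \<and> topspace T = carrier G \<and>
     continuous_map (prod_topology T T) T (\<lambda>(x,y). x \<otimes>\<^bsub>G\<^esub> y) \<and>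
     continuous_map T T (\<lambda>x. inv\<^bsub>G\<^esub> x)"

definition topological_crossed_module ::
  "('a,'c) monoid_scheme \<Rightarrow> 'a topology \<Rightarrow> ('b,'d) monoid_scheme \<Rightarrow> 'b topology \<Rightarrow>
   ('a \<Rightarrow> 'b) \<Rightarrow> ('b \<Rightarrow> 'a \<Rightarrow> 'a) \<Rightarrow> bool" where
  "topological_crossed_module A TA B TB \<alpha> act \<equiv>
     crossed_module A B \<alpha> act \<and> topological_group A TA \<and> topological_group B TB \<and>
     continuous_map TA TB \<alpha> \<and>
     continuous_map (prod_topology TB TA) TA (\<lambda>(b,a). act b a)"

definition homotopic_rel_ends :: "'a topology \<Rightarrow> (real \<Rightarrow> 'a) \<Rightarrow> (real \<Rightarrow> 'a) \<Rightarrow> bool" where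
  "homotopic_rel_ends X p q \<equiv>
     homotopic_with (\<lambda>r. r 0 = p 0 \<and> r 1 = p 1) (subtopology euclideanreal {0..1}) X p q"

definition path_class :: "'a topology \<Rightarrow> (real \<Rightarrow> 'a) \<Rightarrow> (real \<Rightarrow> 'a) set" where
  "path_class X p = {q. pathin X q \<and> homotopic_rel_ends X p q}"

definition rep :: "(real \<Rightarrow> 'a) set \<Rightarrow> real \<Rightarrow> 'a" where
  "rep C = (SOME p. p \<in> C)"

definition pi_group :: "('a,'c) monoid_scheme \<Rightarrow> 'a topology \<Rightarrow> (real \<Rightarrow> 'a) set monoid" where
  "pi_group G T =
     \<lparr> carrier = {path_class T p | p. pathin T p},
       mult = (\<lambda>C D. path_class T (\<lambda>r. rep C r \<otimes>\<^bsub>G\<^esub> rep D r)),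
       one = path_class T (\<lambda>r. \<one>\<^bsub>G\<^esub>) \<rparr>"

text \<open>Crossed square; induced actions \<open>m\<cdot>x = \<mu>(m)\<cdot>x\<close>, \<open>n\<cdot>x = \<nu>(n)\<cdot>x\<close>.\<close>
definition crossed_square ::
  "('l,'e1) monoid_scheme \<Rightarrow> ('m,'e2) monoid_scheme \<Rightarrow> ('n,'e3) monoid_scheme \<Rightarrow> ('p,'e4) monoid_scheme \<Rightarrow>
   ('l \<Rightarrow> 'm) \<Rightarrow> ('l \<Rightarrow> 'n) \<Rightarrow> ('m \<Rightarrow> 'p) \<Rightarrow> ('n \<Rightarrow> 'p) \<Rightarrow>
   ('p \<Rightarrow> 'l \<Rightarrow> 'l) \<Rightarrow> ('p \<Rightarrow> 'm \<Rightarrow> 'm) \<Rightarrow> ('p \<Rightarrow> 'n \<Rightarrow> 'n) \<Rightarrow> ('m \<Rightarrow> 'n \<Rightarrow> 'l) \<Rightarrow> bool" where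
  "crossed_square L M N P lam lam' mu nu actL actM actN h \<equiv>
     lam \<in> hom L M \<and> lam' \<in> hom L N \<and> mu \<in> hom M P \<and> nu \<in> hom N P \<and>
     (\<forall>l\<in>carrier L. nu (lam' l) = mu (lam l)) \<and>
     action_by_aut P L actL \<and> action_by_aut P M actM \<and> action_by_aut P N actN \<and>
     h \<in> carrier M \<rightarrow> carrier N \<rightarrow> carrier L \<and>
     \<comment> \<open>(i)\<close>
     (\<forall>p\<in>carrier P. \<forall>l\<in>carrier L. lam (actL p l) = actM p (lam l)) \<and>
     (\<forall>p\<in>carrier P. \<forall>l\<in>carrier L. lam' (actL p l) = actN p (lam' l)) \<and>
     crossed_module M P mu actM \<and> crossed_module N P nu actN \<and>
     crossed_module L P (\<lambda>l. mu (lam l)) actL \<and>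
     \<comment> \<open>(ii)\<close>
     (\<forall>m\<in>carrier M. \<forall>n\<in>carrier N.
        lam (h m n) = m \<otimes>\<^bsub>M\<^esub> actM (nu n) (inv\<^bsub>M\<^esub> m)) \<and>
     (\<forall>m\<in>carrier M. \<forall>n\<in>carrier N.
        lam' (h m n) = actN (mu m) n \<otimes>\<^bsub>N\<^esub> inv\<^bsub>N\<^esub> n) \<and>
     \<comment> \<open>(iii)\<close>
     (\<forall>l\<in>carrier L. \<forall>n\<in>carrier N.
        h (lam l) n = l \<otimes>\<^bsub>L\<^esub> actL (nu n) (inv\<^bsub>L\<^esub> l)) \<and>
     (\<forall>m\<in>carrier M. \<forall>l\<in>carrier L.
        h m (lam' l) = actL (mu m) l \<otimes>\<^bsub>L\<^esub> inv\<^bsub>L\<^esub> l) \<and>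
     \<comment> \<open>(iv)\<close>
     (\<forall>m\<in>carrier M. \<forall>m'\<in>carrier M. \<forall>n\<in>carrier N.
        h (m \<otimes>\<^bsub>M\<^esub> m') n = actL (mu m) (h m' n) \<otimes>\<^bsub>L\<^esub> h m n) \<and>
     (\<forall>m\<in>carrier M. \<forall>n\<in>carrier N. \<forall>n'\<in>carrier N.
        h m (n \<otimes>\<^bsub>N\<^esub> n') = h m n \<otimes>\<^bsub>L\<^esub> actL (nu n) (h m n')) \<and>
     \<comment> \<open>(v)\<close>
     (\<forall>p\<in>carrier P. \<forall>m\<in>carrier M. \<forall>n\<in>carrier N.
        h (actM p m) (actN p n) = actL p (h m n))"

end

theory Submission
  imports Defs
begin

text \<open>Multiplication of path classes is pointwise, so most axioms of the crossed square are the
  axioms of the crossed module \<open>(A, B, \<alpha>)\<close> applied at every time \<open>r\<close>. The exceptions are the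
  identities mixing a path with its end point (the Peiffer identities of \<open>\<mu>\<close> and \<open>\<mu>\<lambda>\<close>, the
  second half of (iii) and the first half of (iv)). They follow by sliding the end point along the
  path: if \<open>\<Phi> (p s) 0\<close> does not depend on \<open>s\<close>, then \<open>(s, r) \<mapsto> \<Phi> (p (s + (1 - s) r)) r\<close> is a
  homotopy rel end points from \<open>r \<mapsto> \<Phi> (p r) r\<close> to \<open>r \<mapsto> \<Phi> (p 1) r\<close>; the hypothesis holds in
  each case because the paths representing elements of \<open>L\<close> and \<open>M\<close> start at the identity.\<close>

section \<open>Paths up to homotopy rel end points\<close>

lemma homotopic_rel_endsI:
  assumes "continuous_map (prod_topology (top_of_set {0..1::real}) (top_of_set {0..1::real})) X H"
    and "\<And>r. r \<in> {0..1} \<Longrightarrow> H (0, r) = p r" and "\<And>r. r \<in> {0..1} \<Longrightarrow> H (1, r) = q r"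
    and "\<And>s. s \<in> {0..1} \<Longrightarrow> H (s, 0) = p 0" and "\<And>s. s \<in> {0..1} \<Longrightarrow> H (s, 1) = p 1"
  shows "homotopic_rel_ends X p q"
  unfolding homotopic_rel_ends_def
proof (subst homotopic_with)
  show "\<exists>h. continuous_map (prod_topology (top_of_set {0..1::real}) (top_of_set {0..1::real})) X h \<and>
      (\<forall>r\<in>topspace (top_of_set {0..1}). h (0, r) = p r) \<and>
      (\<forall>r\<in>topspace (top_of_set {0..1}). h (1, r) = q r) \<and>
      (\<forall>s\<in>{0..1}. h (s, 0) = p 0 \<and> h (s, 1) = p 1)"
    using assms by (intro exI[of _ H]) auto
qed auto

lemma homotopic_rel_ends_endpoints:
  assumes "homotopic_rel_ends X p q"
  shows "q 0 = p 0" "q 1 = p 1"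
  using homotopic_with_imp_property[OF assms[unfolded homotopic_rel_ends_def]] by simp_all

lemma homotopic_rel_ends_imp_pathin:
  "homotopic_rel_ends X p q \<Longrightarrow> pathin X p \<and> pathin X q"
  unfolding homotopic_rel_ends_def pathin_def by (rule homotopic_with_imp_continuous_maps)

lemma homotopic_rel_ends_refl: "pathin X p \<Longrightarrow> homotopic_rel_ends X p p"
  unfolding homotopic_rel_ends_def pathin_def by simp

lemma homotopic_rel_ends_sym:
  assumes "homotopic_rel_ends X p q"
  shows "homotopic_rel_ends X q p"
  using homotopic_with_symD[OF assms[unfolded homotopic_rel_ends_def]]
  unfolding homotopic_rel_ends_def homotopic_rel_ends_endpoints[OF assms] .

lemma homotopic_rel_ends_trans:
  assumes "homotopic_rel_ends X p q" and "homotopic_rel_ends X q s"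
  shows "homotopic_rel_ends X p s"
  using assms homotopic_with_trans
  unfolding homotopic_rel_ends_def homotopic_rel_ends_endpoints[OF assms(1)] by blast

lemma homotopic_rel_ends_map:
  assumes "continuous_map X Y f" and "homotopic_rel_ends X p q"
  shows "homotopic_rel_ends Y (\<lambda>r. f (p r)) (\<lambda>r. f (q r))"
  using homotopic_with_compose_continuous_map_left[OF assms(2)[unfolded homotopic_rel_ends_def] assms(1),
      of "\<lambda>j. j 0 = f (p 0) \<and> j 1 = f (p 1)"]
  unfolding homotopic_rel_ends_def by (simp add: o_def)

lemma homotopic_rel_ends_map2:
  assumes f: "continuous_map (prod_topology X Y) Z (\<lambda>(x, y). f x y)"
    and "homotopic_rel_ends X p p'" and "homotopic_rel_ends Y q q'"
  shows "homotopic_rel_ends Z (\<lambda>r. f (p r) (q r)) (\<lambda>r. f (p' r) (q' r))"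
proof -
  obtain H where H: "continuous_map (prod_topology (top_of_set {0..1::real}) (top_of_set {0..1::real})) X H"
    "\<forall>r. H (0, r) = p r" "\<forall>r. H (1, r) = p' r" "\<forall>s\<in>{0..1}. H (s, 0) = p 0 \<and> H (s, 1) = p 1"
    using assms(2) unfolding homotopic_rel_ends_def homotopic_with_def by blast
  obtain K where K: "continuous_map (prod_topology (top_of_set {0..1::real}) (top_of_set {0..1::real})) Y K"
    "\<forall>r. K (0, r) = q r" "\<forall>r. K (1, r) = q' r" "\<forall>s\<in>{0..1}. K (s, 0) = q 0 \<and> K (s, 1) = q 1"
    using assms(3) unfolding homotopic_rel_ends_def homotopic_with_def by blast
  have "continuous_map (prod_topology (top_of_set {0..1}) (top_of_set {0..1})) Z (\<lambda>z. f (H z) (K z))"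
    using continuous_map_compose[OF continuous_map_pairedI[OF H(1) K(1)] f] by (simp add: o_def)
  then show ?thesis
    by (rule homotopic_rel_endsI) (use H K in auto)
qed

lemma path_class_eq: "homotopic_rel_ends X p q \<Longrightarrow> path_class X p = path_class X q"
  unfolding path_class_def using homotopic_rel_ends_sym homotopic_rel_ends_trans by blast

lemma path_class_self: "pathin X p \<Longrightarrow> p \<in> path_class X p"
  unfolding path_class_def using homotopic_rel_ends_refl by blast

text \<open>No path hypothesis is needed: being a path depends only on the values on \<open>{0..1}\<close>, and
  the class of a non-path is empty. As a congruence rule this lets the simplifier prove equalities
  of path classes by pointwise group calculations.\<close>

lemma path_class_cong [cong]:
  assumes "X = Y" and "\<And>r. r \<in> {0..1} =simp=> p r = q r"
  shows "path_class X p = path_class Y q"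
proof -
  have eq: "\<And>r. r \<in> {0..1} \<Longrightarrow> p r = q r"
    using assms(2) unfolding simp_implies_def .
  show ?thesis
  proof (cases "pathin X p")
    case True
    have "homotopic_rel_ends X p q"
      unfolding homotopic_rel_ends_def
    proof (rule homotopic_with_equal)
      show "continuous_map (top_of_set {0..1}) X p"
        using True unfolding pathin_def .
      show "q 0 = p 0 \<and> q 1 = p 1"
        using eq[of 0] eq[of 1] by simp
    qed (simp_all add: eq)
    then show ?thesis
      unfolding assms(1)[symmetric] by (rule path_class_eq)
  next
    case False
    have "\<not> pathin Y q"
    proof
      assume "pathin Y q"
      then have "continuous_map (top_of_set {0..1}) X q"
        using assms(1) unfolding pathin_def by simp
      then have "pathin X p"
        unfolding pathin_def by (rule continuous_map_eq) (simp add: eq)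
      with False show False ..
    qed
    then show ?thesis
      using False assms(1) homotopic_rel_ends_imp_pathin unfolding path_class_def by blast
  qed
qed

lemma homotopic_rel_ends_rep:
  assumes "pathin X p"
  shows "homotopic_rel_ends X p (rep (path_class X p))"
proof -
  have "rep (path_class X p) \<in> path_class X p"
    unfolding rep_def using path_class_self[OF assms] by (metis someI)
  then show ?thesis unfolding path_class_def by blast
qed

lemma rep_path_class_endpoints:
  assumes "pathin X p"
  shows "rep (path_class X p) 0 = p 0" "rep (path_class X p) 1 = p 1"
  using homotopic_rel_ends_endpoints[OF homotopic_rel_ends_rep[OF assms]] by simp_all

lemma path_class_map_rep:
  assumes "continuous_map X Y f" and "pathin X p"
  shows "path_class Y (\<lambda>r. f (rep (path_class X p) r)) = path_class Y (\<lambda>r. f (p r))"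
  by (rule path_class_eq[OF homotopic_rel_ends_map[OF assms(1)]])
    (rule homotopic_rel_ends_sym[OF homotopic_rel_ends_rep[OF assms(2)]])

section \<open>The group of based path classes in a topological group\<close>

lemma (in group) inv_mult_cancel_left [simp]:
  "x \<in> carrier G \<Longrightarrow> y \<in> carrier G \<Longrightarrow> inv x \<otimes> (x \<otimes> y) = y"
  by (simp add: m_assoc[symmetric])

lemma topological_group_continuous_mult:
  assumes "topological_group G T" and "continuous_map X T f" and "continuous_map X T g"
  shows "continuous_map X T (\<lambda>x. f x \<otimes>\<^bsub>G\<^esub> g x)"
proof -
  have "continuous_map (prod_topology T T) T (\<lambda>(x, y). x \<otimes>\<^bsub>G\<^esub> y)"
    using assms(1) unfolding topological_group_def by blast
  from continuous_map_compose[OF continuous_map_pairedI[OF assms(2,3)] this]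
  show ?thesis by (simp add: o_def)
qed

lemma topological_group_continuous_inv:
  assumes "topological_group G T" and "continuous_map X T f"
  shows "continuous_map X T (\<lambda>x. inv\<^bsub>G\<^esub> f x)"
  using continuous_map_compose[OF assms(2)] assms(1)
  unfolding topological_group_def by (auto simp: o_def)

lemma topological_group_continuous_const:
  assumes "topological_group G T" and "c \<in> carrier G"
  shows "continuous_map X T (\<lambda>x. c)"
  using assms unfolding topological_group_def by simp

lemma topological_group_topspace: "topological_group G T \<Longrightarrow> topspace T = carrier G"
  unfolding topological_group_def by blast

lemma topological_group_path_carrier:
  assumes "topological_group G T" and "pathin T p" and "r \<in> {0..1}"
  shows "p r \<in> carrier G"
  using assms unfolding topological_group_def pathin_def continuous_map_def by auto

lemma path_class_mult_rep:
  assumes G: "topological_group G T" and p: "pathin T p" and q: "pathin T q"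
  shows "path_class T (\<lambda>r. rep (path_class T p) r \<otimes>\<^bsub>G\<^esub> rep (path_class T q) r)
       = path_class T (\<lambda>r. p r \<otimes>\<^bsub>G\<^esub> q r)"
proof (rule path_class_eq)
  have "continuous_map (prod_topology T T) T (\<lambda>(x, y). x \<otimes>\<^bsub>G\<^esub> y)"
    using G unfolding topological_group_def by blast
  then show "homotopic_rel_ends T (\<lambda>r. rep (path_class T p) r \<otimes>\<^bsub>G\<^esub> rep (path_class T q) r)
      (\<lambda>r. p r \<otimes>\<^bsub>G\<^esub> q r)"
    by (rule homotopic_rel_ends_map2)
      (simp_all add: homotopic_rel_ends_sym homotopic_rel_ends_rep p q)
qed

definition based_path_group :: "('a,'c) monoid_scheme \<Rightarrow> 'a topology \<Rightarrow> (real \<Rightarrow> 'a) set monoid" where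
  "based_path_group G T =
     (pi_group G T)\<lparr>carrier := {C \<in> carrier (pi_group G T). \<forall>\<gamma>\<in>C. \<gamma> 0 = \<one>\<^bsub>G\<^esub>}\<rparr>"

lemma based_path_group_carrier:
  "C \<in> carrier (based_path_group G T) \<longleftrightarrow> (\<exists>p. pathin T p \<and> p 0 = \<one>\<^bsub>G\<^esub> \<and> C = path_class T p)"
proof
  assume "C \<in> carrier (based_path_group G T)"
  then show "\<exists>p. pathin T p \<and> p 0 = \<one>\<^bsub>G\<^esub> \<and> C = path_class T p"
    unfolding based_path_group_def pi_group_def using path_class_self by fastforce
next
  assume "\<exists>p. pathin T p \<and> p 0 = \<one>\<^bsub>G\<^esub> \<and> C = path_class T p"
  then obtain p where "pathin T p" "p 0 = \<one>\<^bsub>G\<^esub>" "C = path_class T p" by blast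
  then show "C \<in> carrier (based_path_group G T)"
    unfolding based_path_group_def pi_group_def path_class_def
    by (force dest: homotopic_rel_ends_endpoints)
qed

lemma based_path_class_closed:
  "pathin T p \<Longrightarrow> p 0 = \<one>\<^bsub>G\<^esub> \<Longrightarrow> path_class T p \<in> carrier (based_path_group G T)"
  using based_path_group_carrier by blast

lemma based_path_groupE:
  assumes "C \<in> carrier (based_path_group G T)"
  obtains p where "pathin T p" "p 0 = \<one>\<^bsub>G\<^esub>" "C = path_class T p"
  using assms based_path_group_carrier by blast

lemma based_path_group_one: "\<one>\<^bsub>based_path_group G T\<^esub> = path_class T (\<lambda>r. \<one>\<^bsub>G\<^esub>)"
  unfolding based_path_group_def pi_group_def by simp

lemma based_path_group_mult:
  assumes "topological_group G T" and "pathin T p" and "pathin T q"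
  shows "path_class T p \<otimes>\<^bsub>based_path_group G T\<^esub> path_class T q = path_class T (\<lambda>r. p r \<otimes>\<^bsub>G\<^esub> q r)"
  using path_class_mult_rep[OF assms] unfolding based_path_group_def pi_group_def by simp

lemma pathin_topological_group_mult:
  "topological_group G T \<Longrightarrow> pathin T p \<Longrightarrow> pathin T q \<Longrightarrow> pathin T (\<lambda>r. p r \<otimes>\<^bsub>G\<^esub> q r)"
  unfolding pathin_def by (rule topological_group_continuous_mult)

lemma pathin_topological_group_inv:
  "topological_group G T \<Longrightarrow> pathin T p \<Longrightarrow> pathin T (\<lambda>r. inv\<^bsub>G\<^esub> p r)"
  unfolding pathin_def by (rule topological_group_continuous_inv)

lemmas topological_group_path_simps =
  based_path_group_mult pathin_topological_group_mult pathin_topological_group_inv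
  topological_group_path_carrier topological_group_topspace

lemma group_based_path_group:
  assumes G: "topological_group G T"
  shows "group (based_path_group G T)"
proof -
  interpret G: group G using G unfolding topological_group_def by blast
  note simps = topological_group_path_simps[OF G] based_path_group_one based_path_class_closed
  show ?thesis
  proof (rule groupI)
    fix C assume "C \<in> carrier (based_path_group G T)"
    then obtain p where "pathin T p" "p 0 = \<one>\<^bsub>G\<^esub>" "C = path_class T p"
      by (rule based_path_groupE)
    then show "\<exists>C'\<in>carrier (based_path_group G T). C' \<otimes>\<^bsub>based_path_group G T\<^esub> C = \<one>\<^bsub>based_path_group G T\<^esub>"
      by (intro bexI[of _ "path_class T (\<lambda>r. inv\<^bsub>G\<^esub> p r)"]) (simp_all add: simps)
  qed ((elim based_path_groupE)?, simp add: simps G.m_assoc)+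
qed

lemma based_path_group_inv:
  assumes G: "topological_group G T" and "pathin T p" and "p 0 = \<one>\<^bsub>G\<^esub>"
  shows "inv\<^bsub>based_path_group G T\<^esub> path_class T p = path_class T (\<lambda>r. inv\<^bsub>G\<^esub> p r)"
proof -
  interpret G: group G using G unfolding topological_group_def by blast
  interpret P: group "based_path_group G T" using group_based_path_group[OF G] .
  show ?thesis
    using assms(2,3) by (intro P.inv_equality)
      (simp_all add: topological_group_path_simps[OF G] based_path_group_one based_path_class_closed)
qed

lemma rep_path_class_1_hom:
  assumes "topological_group G T"
  shows "(\<lambda>C. rep C 1) \<in> hom (based_path_group G T) G"
  by (rule homI; elim based_path_groupE;
      simp add: topological_group_path_simps[OF assms] rep_path_class_endpoints)

lemma continuous_map_path_snd:
  "pathin X p \<Longrightarrow> continuous_map (prod_topology Y (top_of_set {0..1})) X (\<lambda>z. p (snd z))"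
  unfolding pathin_def using continuous_map_compose[OF continuous_map_snd] by (auto simp: o_def)

lemma path_class_slide:
  fixes \<Phi> :: "'x \<Rightarrow> real \<Rightarrow> 'y"
  assumes p: "pathin X p"
    and \<Phi>: "continuous_map (prod_topology X (top_of_set {0..1})) Y (\<lambda>z. \<Phi> (fst z) (snd z))"
    and start: "\<And>s. s \<in> {0..1} \<Longrightarrow> \<Phi> (p s) 0 = \<Phi> (p 0) 0"
  shows "path_class Y (\<lambda>r. \<Phi> (p r) r) = path_class Y (\<lambda>r. \<Phi> (p 1) r)"
proof (rule path_class_eq, rule homotopic_rel_endsI)
  let ?I = "top_of_set {0..1::real}"
  let ?g = "\<lambda>z::real \<times> real. fst z + (1 - fst z) * snd z"
  have "continuous_map (prod_topology ?I ?I) euclideanreal ?g"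
    by (intro continuous_intros continuous_map_into_fulltopology[OF continuous_map_fst]
        continuous_map_into_fulltopology[OF continuous_map_snd])
  moreover have "?g z \<in> {0..1}" if "z \<in> topspace (prod_topology ?I ?I)" for z
  proof -
    have "fst z \<in> {0..1}" "snd z \<in> {0..1}" using that by auto
    then have "(1 - fst z) * snd z \<le> 1 - fst z" "0 \<le> (1 - fst z) * snd z"
      by (simp_all add: mult_left_le)
    then show ?thesis using \<open>fst z \<in> {0..1}\<close> by simp
  qed
  ultimately have "continuous_map (prod_topology ?I ?I) ?I ?g"
    by (simp only: continuous_map_in_subtopology topspace_subtopology) auto
  from continuous_map_compose[OF this p[unfolded pathin_def]]
  have "continuous_map (prod_topology ?I ?I) (prod_topology X ?I) (\<lambda>z. (p (?g z), snd z))"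
    unfolding o_def using continuous_map_snd by (rule continuous_map_pairedI)
  from continuous_map_compose[OF this \<Phi>]
  show "continuous_map (prod_topology ?I ?I) Y (\<lambda>z. \<Phi> (p (?g z)) (snd z))"
    by (simp only: o_def fst_conv snd_conv)
qed (auto intro: start)

lemma action_by_autI:
  assumes "group P"
    and hom: "\<And>b. b \<in> carrier P \<Longrightarrow> f b \<in> hom X X"
    and one: "\<And>x. x \<in> carrier X \<Longrightarrow> f \<one>\<^bsub>P\<^esub> x = x"
    and comp: "\<And>b b' x. \<lbrakk>b \<in> carrier P; b' \<in> carrier P; x \<in> carrier X\<rbrakk> \<Longrightarrow> f (b \<otimes>\<^bsub>P\<^esub> b') x = f b (f b' x)"
  shows "action_by_aut P X f"
proof -
  interpret P: group P by fact
  have inverse: "f b (f (inv\<^bsub>P\<^esub> b) x) = x" if "b \<in> carrier P" "x \<in> carrier X" for b x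
    using comp[of b "inv\<^bsub>P\<^esub> b" x] one that by simp
  have "f b \<in> iso X X" if b: "b \<in> carrier P" for b
  proof (rule isoI[OF hom[OF b]])
    show "bij_betw (f b) (carrier X) (carrier X)"
    proof (rule bij_betwI[where g = "f (inv\<^bsub>P\<^esub> b)"])
      show "f b \<in> carrier X \<rightarrow> carrier X" "f (inv\<^bsub>P\<^esub> b) \<in> carrier X \<rightarrow> carrier X"
        using hom b by (auto dest: hom_in_carrier)
    qed (use inverse[of b] inverse[of "inv\<^bsub>P\<^esub> b"] b in auto)
  qed
  then show ?thesis unfolding action_by_aut_def using one comp by blast
qed

section \<open>The crossed square of a topological crossed module\<close>

locale top_crossed_module =
  fixes A :: "'a monoid" and TA :: "'a topology"
    and B :: "'b monoid" and TB :: "'b topology"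
    and \<alpha> :: "'a \<Rightarrow> 'b" and act :: "'b \<Rightarrow> 'a \<Rightarrow> 'a"
  assumes topological_crossed_module: "topological_crossed_module A TA B TB \<alpha> act"
begin

lemma crossed_module: "crossed_module A B \<alpha> act"
  and top_A: "topological_group A TA" and top_B: "topological_group B TB"
  and continuous_alpha: "continuous_map TA TB \<alpha>"
  and continuous_act: "continuous_map (prod_topology TB TA) TA (\<lambda>(b, a). act b a)"
  using topological_crossed_module unfolding topological_crossed_module_def by simp_all

sublocale A: group A
  using top_A unfolding topological_group_def by blast

sublocale B: group B
  using top_B unfolding topological_group_def by blast

lemma action: "action_by_aut B A act"
  and alpha_hom: "\<alpha> \<in> hom A B"
  and alpha_act: "\<And>b a. b \<in> carrier B \<Longrightarrow> a \<in> carrier A \<Longrightarrow> \<alpha> (act b a) = b \<otimes>\<^bsub>B\<^esub> \<alpha> a \<otimes>\<^bsub>B\<^esub> inv\<^bsub>B\<^esub> b"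
  and act_alpha: "\<And>a a'. a \<in> carrier A \<Longrightarrow> a' \<in> carrier A \<Longrightarrow> act (\<alpha> a) a' = a \<otimes>\<^bsub>A\<^esub> a' \<otimes>\<^bsub>A\<^esub> inv\<^bsub>A\<^esub> a"
  using crossed_module unfolding crossed_module_def by simp_all

lemma act_hom: "b \<in> carrier B \<Longrightarrow> group_hom A A (act b)"
  using action unfolding action_by_aut_def iso_def group_hom_def group_hom_axioms_def
  by (blast intro: A.group_axioms)

lemma act_closed [simp]: "b \<in> carrier B \<Longrightarrow> a \<in> carrier A \<Longrightarrow> act b a \<in> carrier A"
  using group_hom.hom_closed[OF act_hom] .

lemma act_mult [simp]:
  "b \<in> carrier B \<Longrightarrow> a \<in> carrier A \<Longrightarrow> a' \<in> carrier A \<Longrightarrow> act b (a \<otimes>\<^bsub>A\<^esub> a') = act b a \<otimes>\<^bsub>A\<^esub> act b a'"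
  using group_hom.hom_mult[OF act_hom] .

lemma act_one [simp]: "b \<in> carrier B \<Longrightarrow> act b \<one>\<^bsub>A\<^esub> = \<one>\<^bsub>A\<^esub>"
  using group_hom.hom_one[OF act_hom] .

lemma act_inv [simp]: "b \<in> carrier B \<Longrightarrow> a \<in> carrier A \<Longrightarrow> act b (inv\<^bsub>A\<^esub> a) = inv\<^bsub>A\<^esub> act b a"
  using group_hom.hom_inv[OF act_hom] .

lemma act_one_left [simp]: "a \<in> carrier A \<Longrightarrow> act \<one>\<^bsub>B\<^esub> a = a"
  using action unfolding action_by_aut_def by blast

lemma act_act:
  "b \<in> carrier B \<Longrightarrow> b' \<in> carrier B \<Longrightarrow> a \<in> carrier A \<Longrightarrow> act (b \<otimes>\<^bsub>B\<^esub> b') a = act b (act b' a)"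
  using action unfolding action_by_aut_def by blast

lemma act_inv_act [simp]: "b \<in> carrier B \<Longrightarrow> a \<in> carrier A \<Longrightarrow> act (inv\<^bsub>B\<^esub> b) (act b a) = a"
  using act_act[of "inv\<^bsub>B\<^esub> b" b a] by simp

lemma alpha_group_hom: "group_hom A B \<alpha>"
  using alpha_hom by (simp add: group_hom_def group_hom_axioms_def A.group_axioms B.group_axioms)

lemma alpha_closed [simp]: "a \<in> carrier A \<Longrightarrow> \<alpha> a \<in> carrier B"
  using group_hom.hom_closed[OF alpha_group_hom] .

lemma alpha_mult [simp]: "a \<in> carrier A \<Longrightarrow> a' \<in> carrier A \<Longrightarrow> \<alpha> (a \<otimes>\<^bsub>A\<^esub> a') = \<alpha> a \<otimes>\<^bsub>B\<^esub> \<alpha> a'"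
  using group_hom.hom_mult[OF alpha_group_hom] .

lemma alpha_one [simp]: "\<alpha> \<one>\<^bsub>A\<^esub> = \<one>\<^bsub>B\<^esub>"
  using group_hom.hom_one[OF alpha_group_hom] .

lemma alpha_inv [simp]: "a \<in> carrier A \<Longrightarrow> \<alpha> (inv\<^bsub>A\<^esub> a) = inv\<^bsub>B\<^esub> \<alpha> a"
  using group_hom.hom_inv[OF alpha_group_hom] .

lemma continuous_map_alpha: "continuous_map X TA f \<Longrightarrow> continuous_map X TB (\<lambda>x. \<alpha> (f x))"
  using continuous_map_compose[OF _ continuous_alpha] by (simp add: o_def)

lemma continuous_map_act:
  "continuous_map X TB f \<Longrightarrow> continuous_map X TA g \<Longrightarrow> continuous_map X TA (\<lambda>x. act (f x) (g x))"
  using continuous_map_compose[OF continuous_map_pairedI continuous_act] by (simp add: o_def)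

lemmas continuous_map_ops =
  topological_group_continuous_mult[OF top_A] topological_group_continuous_inv[OF top_A]
  topological_group_continuous_const[OF top_A]
  topological_group_continuous_mult[OF top_B] topological_group_continuous_inv[OF top_B]
  topological_group_continuous_const[OF top_B]
  continuous_map_alpha continuous_map_act

lemma pathin_alpha [simp]: "pathin TA \<gamma> \<Longrightarrow> pathin TB (\<lambda>r. \<alpha> (\<gamma> r))"
  unfolding pathin_def by (rule continuous_map_alpha)

lemma pathin_act [simp]: "pathin TB \<beta> \<Longrightarrow> pathin TA \<gamma> \<Longrightarrow> pathin TA (\<lambda>r. act (\<beta> r) (\<gamma> r))"
  unfolding pathin_def by (rule continuous_map_act)

lemmas based_path_group_simps [simp] =
  topological_group_path_simps[OF top_A] based_path_group_inv[OF top_A]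
  topological_group_path_simps[OF top_B] based_path_group_inv[OF top_B]
  rep_path_class_endpoints based_path_class_closed

definition alpha_path :: "(real \<Rightarrow> 'a) set \<Rightarrow> (real \<Rightarrow> 'b) set" where
  "alpha_path C = path_class TB (\<lambda>r. \<alpha> (rep C r))"

definition act_path :: "'b \<Rightarrow> (real \<Rightarrow> 'a) set \<Rightarrow> (real \<Rightarrow> 'a) set" where
  "act_path b C = path_class TA (\<lambda>r. act b (rep C r))"

definition conj_path :: "'b \<Rightarrow> (real \<Rightarrow> 'b) set \<Rightarrow> (real \<Rightarrow> 'b) set" where
  "conj_path b D = path_class TB (\<lambda>r. b \<otimes>\<^bsub>B\<^esub> rep D r \<otimes>\<^bsub>B\<^esub> inv\<^bsub>B\<^esub> b)"

definition commutator_path :: "(real \<Rightarrow> 'b) set \<Rightarrow> 'a \<Rightarrow> (real \<Rightarrow> 'a) set" where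
  "commutator_path D a = path_class TA (\<lambda>r. act (rep D r) a \<otimes>\<^bsub>A\<^esub> inv\<^bsub>A\<^esub> a)"

lemma alpha_path_class [simp]:
  "pathin TA p \<Longrightarrow> alpha_path (path_class TA p) = path_class TB (\<lambda>r. \<alpha> (p r))"
  unfolding alpha_path_def by (rule path_class_map_rep[OF continuous_alpha])

lemma act_path_class [simp]:
  assumes "b \<in> carrier B" and "pathin TA p"
  shows "act_path b (path_class TA p) = path_class TA (\<lambda>r. act b (p r))"
  unfolding act_path_def using assms
  by (intro path_class_map_rep continuous_map_ops continuous_map_id[unfolded id_def]) auto

lemma conj_path_class [simp]:
  assumes "b \<in> carrier B" and "pathin TB p"
  shows "conj_path b (path_class TB p) = path_class TB (\<lambda>r. b \<otimes>\<^bsub>B\<^esub> p r \<otimes>\<^bsub>B\<^esub> inv\<^bsub>B\<^esub> b)"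
  unfolding conj_path_def using assms
  by (intro path_class_map_rep[where f = "\<lambda>x. b \<otimes>\<^bsub>B\<^esub> x \<otimes>\<^bsub>B\<^esub> inv\<^bsub>B\<^esub> b"]
      continuous_map_ops continuous_map_id[unfolded id_def]) auto

lemma commutator_path_class [simp]:
  assumes "a \<in> carrier A" and "pathin TB p"
  shows "commutator_path (path_class TB p) a = path_class TA (\<lambda>r. act (p r) a \<otimes>\<^bsub>A\<^esub> inv\<^bsub>A\<^esub> a)"
  unfolding commutator_path_def using assms
  by (intro path_class_map_rep[where f = "\<lambda>x. act x a \<otimes>\<^bsub>A\<^esub> inv\<^bsub>A\<^esub> a"]
      continuous_map_ops continuous_map_id[unfolded id_def]) auto


lemma alpha_path_hom: "alpha_path \<in> hom (based_path_group A TA) (based_path_group B TB)"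
  by (rule homI; elim based_path_groupE; simp)

lemma rep_alpha_path [simp]:
  "C \<in> carrier (based_path_group A TA) \<Longrightarrow> rep (alpha_path C) 1 = \<alpha> (rep C 1)"
  by (elim based_path_groupE) simp

lemma act_path_action: "action_by_aut B (based_path_group A TA) act_path"
proof (rule action_by_autI[OF B.group_axioms])
  fix b assume "b \<in> carrier B"
  then show "act_path b \<in> hom (based_path_group A TA) (based_path_group A TA)"
    by (intro homI; elim based_path_groupE; simp)
qed (elim based_path_groupE; simp add: act_act)+

lemma conj_path_action: "action_by_aut B (based_path_group B TB) conj_path"
proof (rule action_by_autI[OF B.group_axioms])
  fix b assume "b \<in> carrier B"
  then show "conj_path b \<in> hom (based_path_group B TB) (based_path_group B TB)"
    by (intro homI; elim based_path_groupE; simp add: B.m_assoc)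
qed (elim based_path_groupE; simp add: B.m_assoc B.inv_mult_group)+

lemma alpha_path_act_path:
  "b \<in> carrier B \<Longrightarrow> C \<in> carrier (based_path_group A TA) \<Longrightarrow>
    alpha_path (act_path b C) = conj_path b (alpha_path C)"
  by (elim based_path_groupE) (simp add: alpha_act)

lemma rep_act_path:
  "b \<in> carrier B \<Longrightarrow> C \<in> carrier (based_path_group A TA) \<Longrightarrow> rep (act_path b C) 1 = act b (rep C 1)"
  by (elim based_path_groupE) simp

lemma conj_path_peiffer:
  assumes "D \<in> carrier (based_path_group B TB)" and "D' \<in> carrier (based_path_group B TB)"
  shows "conj_path (rep D 1) D' = D \<otimes>\<^bsub>based_path_group B TB\<^esub> D' \<otimes>\<^bsub>based_path_group B TB\<^esub> inv\<^bsub>based_path_group B TB\<^esub> D"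
proof -
  obtain \<beta> where \<beta>: "pathin TB \<beta>" "\<beta> 0 = \<one>\<^bsub>B\<^esub>" "D = path_class TB \<beta>"
    using assms(1) by (rule based_path_groupE)
  obtain \<beta>' where \<beta>': "pathin TB \<beta>'" "\<beta>' 0 = \<one>\<^bsub>B\<^esub>" "D' = path_class TB \<beta>'"
    using assms(2) by (rule based_path_groupE)
  have "path_class TB (\<lambda>r. \<beta> r \<otimes>\<^bsub>B\<^esub> \<beta>' r \<otimes>\<^bsub>B\<^esub> inv\<^bsub>B\<^esub> \<beta> r)
      = path_class TB (\<lambda>r. \<beta> 1 \<otimes>\<^bsub>B\<^esub> \<beta>' r \<otimes>\<^bsub>B\<^esub> inv\<^bsub>B\<^esub> \<beta> 1)"
    using \<beta> \<beta>'
    by (intro path_class_slide[where X = TB and \<Phi> = "\<lambda>x r. x \<otimes>\<^bsub>B\<^esub> \<beta>' r \<otimes>\<^bsub>B\<^esub> inv\<^bsub>B\<^esub> x"]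
        continuous_map_ops continuous_map_fst continuous_map_path_snd) auto
  then show ?thesis
    using \<beta> \<beta>' by simp
qed

lemma act_path_peiffer:
  assumes "C \<in> carrier (based_path_group A TA)" and "C' \<in> carrier (based_path_group A TA)"
  shows "act_path (\<alpha> (rep C 1)) C'
    = C \<otimes>\<^bsub>based_path_group A TA\<^esub> C' \<otimes>\<^bsub>based_path_group A TA\<^esub> inv\<^bsub>based_path_group A TA\<^esub> C"
proof -
  obtain \<gamma> where \<gamma>: "pathin TA \<gamma>" "\<gamma> 0 = \<one>\<^bsub>A\<^esub>" "C = path_class TA \<gamma>"
    using assms(1) by (rule based_path_groupE)
  obtain \<gamma>' where \<gamma>': "pathin TA \<gamma>'" "\<gamma>' 0 = \<one>\<^bsub>A\<^esub>" "C' = path_class TA \<gamma>'"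
    using assms(2) by (rule based_path_groupE)
  have "path_class TA (\<lambda>r. act (\<alpha> (\<gamma> r)) (\<gamma>' r)) = path_class TA (\<lambda>r. act (\<alpha> (\<gamma> 1)) (\<gamma>' r))"
    using \<gamma> \<gamma>'
    by (intro path_class_slide[where X = TA and \<Phi> = "\<lambda>x r. act (\<alpha> x) (\<gamma>' r)"]
        continuous_map_ops continuous_map_fst continuous_map_path_snd) auto
  then show ?thesis
    using \<gamma> \<gamma>' by (simp add: act_alpha)
qed


lemma crossed_module_conj_path: "crossed_module (based_path_group B TB) B (\<lambda>D. rep D 1) conj_path"
  unfolding crossed_module_def
proof (intro conjI ballI)
  show "(\<lambda>D. rep D 1) \<in> hom (based_path_group B TB) B"
    by (rule rep_path_class_1_hom[OF top_B])
  fix b D assume "b \<in> carrier B" "D \<in> carrier (based_path_group B TB)"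
  then show "rep (conj_path b D) 1 = b \<otimes>\<^bsub>B\<^esub> rep D 1 \<otimes>\<^bsub>B\<^esub> inv\<^bsub>B\<^esub> b"
    by (elim based_path_groupE) simp
qed (simp_all add: group_based_path_group[OF top_B] B.group_axioms conj_path_action conj_path_peiffer)

lemma crossed_module_act_path:
  "crossed_module (based_path_group A TA) B (\<lambda>C. rep (alpha_path C) 1) act_path"
  unfolding crossed_module_def
proof (intro conjI ballI)
  show "(\<lambda>C. rep (alpha_path C) 1) \<in> hom (based_path_group A TA) B"
    using hom_compose[OF alpha_path_hom rep_path_class_1_hom[OF top_B]] by (simp add: o_def)
  fix b C assume "b \<in> carrier B" "C \<in> carrier (based_path_group A TA)"
  then show "rep (alpha_path (act_path b C)) 1 = b \<otimes>\<^bsub>B\<^esub> rep (alpha_path C) 1 \<otimes>\<^bsub>B\<^esub> inv\<^bsub>B\<^esub> b"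
    by (elim based_path_groupE) (simp add: alpha_act)
qed (simp_all add: group_based_path_group[OF top_A] B.group_axioms act_path_action act_path_peiffer)

lemma commutator_path_closed:
  "D \<in> carrier (based_path_group B TB) \<Longrightarrow> a \<in> carrier A \<Longrightarrow>
    commutator_path D a \<in> carrier (based_path_group A TA)"
  by (elim based_path_groupE) simp

lemma alpha_path_commutator_path:
  "D \<in> carrier (based_path_group B TB) \<Longrightarrow> a \<in> carrier A \<Longrightarrow>
    alpha_path (commutator_path D a)
    = D \<otimes>\<^bsub>based_path_group B TB\<^esub> conj_path (\<alpha> a) (inv\<^bsub>based_path_group B TB\<^esub> D)"
  by (elim based_path_groupE) (simp add: alpha_act B.m_assoc)

lemma rep_commutator_path:
  "D \<in> carrier (based_path_group B TB) \<Longrightarrow> a \<in> carrier A \<Longrightarrow>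
    rep (commutator_path D a) 1 = act (rep D 1) a \<otimes>\<^bsub>A\<^esub> inv\<^bsub>A\<^esub> a"
  by (elim based_path_groupE) simp

lemma commutator_path_alpha_path:
  "C \<in> carrier (based_path_group A TA) \<Longrightarrow> a \<in> carrier A \<Longrightarrow>
    commutator_path (alpha_path C) a
    = C \<otimes>\<^bsub>based_path_group A TA\<^esub> act_path (\<alpha> a) (inv\<^bsub>based_path_group A TA\<^esub> C)"
  by (elim based_path_groupE) (simp add: act_alpha A.m_assoc A.inv_mult_group)

lemma commutator_path_rep:
  assumes "D \<in> carrier (based_path_group B TB)" and "C \<in> carrier (based_path_group A TA)"
  shows "commutator_path D (rep C 1)
    = act_path (rep D 1) C \<otimes>\<^bsub>based_path_group A TA\<^esub> inv\<^bsub>based_path_group A TA\<^esub> C"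
proof -
  obtain \<beta> where \<beta>: "pathin TB \<beta>" "\<beta> 0 = \<one>\<^bsub>B\<^esub>" "D = path_class TB \<beta>"
    using assms(1) by (rule based_path_groupE)
  obtain \<gamma> where \<gamma>: "pathin TA \<gamma>" "\<gamma> 0 = \<one>\<^bsub>A\<^esub>" "C = path_class TA \<gamma>"
    using assms(2) by (rule based_path_groupE)
  have "commutator_path D (rep C 1) = path_class TA (\<lambda>r. act (\<beta> r) (\<gamma> 1) \<otimes>\<^bsub>A\<^esub> inv\<^bsub>A\<^esub> \<gamma> 1)"
    using \<beta> \<gamma> by simp
  also have "\<dots> = path_class TA (\<lambda>r. act (\<beta> r) (\<gamma> r) \<otimes>\<^bsub>A\<^esub> inv\<^bsub>A\<^esub> \<gamma> r)"
    using \<beta> \<gamma>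
    by (intro path_class_slide[where X = TA and \<Phi> = "\<lambda>x r. act (\<beta> r) x \<otimes>\<^bsub>A\<^esub> inv\<^bsub>A\<^esub> x", symmetric]
        continuous_map_ops continuous_map_fst continuous_map_path_snd) auto
  also have "\<dots> = path_class TA (\<lambda>r. act (\<beta> 1) (\<gamma> r) \<otimes>\<^bsub>A\<^esub> inv\<^bsub>A\<^esub> \<gamma> r)"
    using \<beta> \<gamma>
    by (intro path_class_slide[where X = TB and \<Phi> = "\<lambda>x r. act x (\<gamma> r) \<otimes>\<^bsub>A\<^esub> inv\<^bsub>A\<^esub> \<gamma> r"]
        continuous_map_ops continuous_map_fst continuous_map_path_snd) auto
  also have "\<dots> = act_path (rep D 1) C \<otimes>\<^bsub>based_path_group A TA\<^esub> inv\<^bsub>based_path_group A TA\<^esub> C"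
    using \<beta> \<gamma> by simp
  finally show ?thesis .
qed

lemma commutator_path_mult_left:
  assumes "D \<in> carrier (based_path_group B TB)" and "D' \<in> carrier (based_path_group B TB)"
    and a: "a \<in> carrier A"
  shows "commutator_path (D \<otimes>\<^bsub>based_path_group B TB\<^esub> D') a
    = act_path (rep D 1) (commutator_path D' a) \<otimes>\<^bsub>based_path_group A TA\<^esub> commutator_path D a"
proof -
  obtain \<beta> where \<beta>: "pathin TB \<beta>" "\<beta> 0 = \<one>\<^bsub>B\<^esub>" "D = path_class TB \<beta>"
    using assms(1) by (rule based_path_groupE)
  obtain \<beta>' where \<beta>': "pathin TB \<beta>'" "\<beta>' 0 = \<one>\<^bsub>B\<^esub>" "D' = path_class TB \<beta>'"
    using assms(2) by (rule based_path_groupE)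
  let ?h = "\<lambda>\<delta> r. act (\<delta> r) a \<otimes>\<^bsub>A\<^esub> inv\<^bsub>A\<^esub> a"
  have "commutator_path (D \<otimes>\<^bsub>based_path_group B TB\<^esub> D') a
      = path_class TA (\<lambda>r. act (\<beta> r) (?h \<beta>' r) \<otimes>\<^bsub>A\<^esub> ?h \<beta> r)"
    using \<beta> \<beta>' a by (simp add: act_act A.m_assoc)
  also have "\<dots> = path_class TA (\<lambda>r. act (\<beta> 1) (?h \<beta>' r) \<otimes>\<^bsub>A\<^esub> ?h \<beta> r)"
    using \<beta> \<beta>' a
    by (intro path_class_slide[where X = TB and \<Phi> = "\<lambda>x r. act x (?h \<beta>' r) \<otimes>\<^bsub>A\<^esub> ?h \<beta> r"]
        continuous_map_ops continuous_map_fst continuous_map_path_snd) auto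
  also have "\<dots> = act_path (rep D 1) (commutator_path D' a) \<otimes>\<^bsub>based_path_group A TA\<^esub> commutator_path D a"
    using \<beta> \<beta>' a by simp
  finally show ?thesis .
qed

lemma commutator_path_mult_right:
  "D \<in> carrier (based_path_group B TB) \<Longrightarrow> a \<in> carrier A \<Longrightarrow> a' \<in> carrier A \<Longrightarrow>
    commutator_path D (a \<otimes>\<^bsub>A\<^esub> a')
    = commutator_path D a \<otimes>\<^bsub>based_path_group A TA\<^esub> act_path (\<alpha> a) (commutator_path D a')"
  by (elim based_path_groupE) (simp add: act_alpha A.m_assoc A.inv_mult_group)

lemma commutator_path_equivariant:
  "b \<in> carrier B \<Longrightarrow> D \<in> carrier (based_path_group B TB) \<Longrightarrow> a \<in> carrier A \<Longrightarrow>
    commutator_path (conj_path b D) (act b a) = act_path b (commutator_path D a)"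
  by (elim based_path_groupE) (simp add: act_act)


end

theorem mainTheorem11:
  fixes A :: "'a monoid" and TA :: "'a topology"
    and B :: "'b monoid" and TB :: "'b topology"
    and \<alpha> :: "'a \<Rightarrow> 'b" and act :: "'b \<Rightarrow> 'a \<Rightarrow> 'a"
  assumes "topological_crossed_module A TA B TB \<alpha> act"
  defines "L \<equiv> (pi_group A TA)\<lparr>carrier := {C \<in> carrier (pi_group A TA). \<forall>\<gamma>\<in>C. \<gamma> 0 = \<one>\<^bsub>A\<^esub>}\<rparr>"
      and "M \<equiv> (pi_group B TB)\<lparr>carrier := {D \<in> carrier (pi_group B TB). \<forall>\<beta>\<in>D. \<beta> 0 = \<one>\<^bsub>B\<^esub>}\<rparr>"
      and "lam \<equiv> (\<lambda>C. path_class TB (\<lambda>r. \<alpha> (rep C r)))"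
      and "lam' \<equiv> (\<lambda>C. rep C 1)"
      and "mu \<equiv> (\<lambda>D. rep D 1)"
      and "actL \<equiv> (\<lambda>b C. path_class TA (\<lambda>r. act b (rep C r)))"
      and "actM \<equiv> (\<lambda>b D. path_class TB (\<lambda>r. b \<otimes>\<^bsub>B\<^esub> rep D r \<otimes>\<^bsub>B\<^esub> inv\<^bsub>B\<^esub> b))"
      and "h \<equiv> (\<lambda>D a. path_class TA (\<lambda>r. act (rep D r) a \<otimes>\<^bsub>A\<^esub> inv\<^bsub>A\<^esub> a))"
  shows "crossed_square L M A B lam lam' mu \<alpha> actL actM act h"
proof -
  interpret top_crossed_module A TA B TB \<alpha> act by (rule top_crossed_module.intro) fact
  have paper_notation: "L = based_path_group A TA" "M = based_path_group B TB"
    "lam = alpha_path" "actL = act_path" "actM = conj_path" "h = commutator_path"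
    unfolding L_def M_def based_path_group_def lam_def actL_def actM_def h_def
      alpha_path_def act_path_def conj_path_def commutator_path_def
    by simp_all
  show ?thesis
    unfolding crossed_square_def paper_notation lam'_def mu_def
    by (intro conjI ballI funcsetI alpha_path_hom rep_path_class_1_hom top_A top_B alpha_hom
        rep_alpha_path[symmetric] act_path_action conj_path_action action
        commutator_path_closed alpha_path_act_path rep_act_path
        crossed_module_conj_path crossed_module crossed_module_act_path
        alpha_path_commutator_path rep_commutator_path commutator_path_alpha_path commutator_path_rep
        commutator_path_mult_left commutator_path_mult_right commutator_path_equivariant; assumption)
qed

end
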